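(* For every $A\in\mathbb{C}^{m\times n}$ and every $\alpha_0,\beta_0\in(0,\tfrac{\pi}{2})$, $$\max_{z\in S^m_{\alpha_0}}\min_{w\in S^n_{\beta_0}}\mathrm{Re}(z^*Aw)=\min_{w\in S^n_{\beta_0}}\max_{z\in S^m_{\alpha_0}}\mathrm{Re}(z^*Aw),$$ i.e. $\underline v=\overline v$. Consequently every two-player zero-sum complex game $G_{\mathcal C}(A)$ has a complex Nash equilibrium in mixed complex strategies.
   Context: For $\gamma\in(0,\tfrac{\pi}{2})$ and $p\ge 1$ let $S^p_\gamma=\{z\in\mathbb{C}^p:\ \text{for each }k,\ z_k=0\text{ or }|\arg z_k|\le\gamma,\ \sum_{k=1}^p z_k=1\}$ ($\arg$ the principal argument in $(-\pi,\pi]$). The two-player zero-sum complex game $G_{\mathcal C}(A)$, for $A=(a_{ij})\in\mathbb{C}^{m\times n}$ and strategy arguments $\alpha_0,\beta_0\in(0,\tfrac{\pi}{2})$: player I chooses $z\in S^m_{\alpha_0}$, player II chooses $w\in S^n_{\beta_0}$, player I receives $\mathrm{Re}(z^*Aw)$ and player II receives $-\mathrm{Re}(z^*Aw)$, where $z^*$ is the conjugate transpose. A pair $(z^0,w^0)\in S^m_{\alpha_0}\times S^n_{\beta_0}$ is a complex Nash equilibrium if $\mathrm{Re}(z^*Aw^0)\le\mathrm{Re}((z^0)^*Aw^0)\le\mathrm{Re}((z^0)^*Aw)$ for all $z\in S^m_{\alpha_0}$, $w\in S^n_{\beta_0}$. *)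

theory Defs
  imports "HOL-Analysis.Analysis"
begin

definition cstrat :: "real \<Rightarrow> (complex ^ 'p::finite) set" where
  "cstrat \<gamma> = {z. (\<forall>k. z $ k = 0 \<or> \<bar>Arg (z $ k)\<bar> \<le> \<gamma>) \<and> (\<Sum>k\<in>UNIV. z $ k) = 1}"

definition cpayoff :: "complex ^ 'n::finite ^ 'm::finite \<Rightarrow> complex ^ 'm \<Rightarrow> complex ^ 'n \<Rightarrow> real" where
  "cpayoff A z w = Re (\<Sum>i\<in>UNIV. \<Sum>j\<in>UNIV. cnj (z $ i) * A $ i $ j * w $ j)"

definition complex_nash :: "complex ^ 'n::finite ^ 'm::finite \<Rightarrow> real \<Rightarrow> real \<Rightarrow> complex ^ 'm \<Rightarrow> complex ^ 'n \<Rightarrow> bool" where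
  "complex_nash A \<alpha>0 \<beta>0 z0 w0 \<longleftrightarrow> z0 \<in> cstrat \<alpha>0 \<and> w0 \<in> cstrat \<beta>0 \<and>
     (\<forall>z\<in>cstrat \<alpha>0. cpayoff A z w0 \<le> cpayoff A z0 w0) \<and>
     (\<forall>w\<in>cstrat \<beta>0. cpayoff A z0 w0 \<le> cpayoff A z0 w)"

end

theory Submission
  imports Defs
begin

text \<open>
  A complex strategy set is a slice of a product of closed convex sectors by the affine
  hyperplane \<open>\<Sum>k z\<^sub>k = 1\<close>, hence a nonempty compact convex subset of a Euclidean space,
  and the payoff \<open>Re (z\<^sup>* A w)\<close> is the real inner product \<open>z \<bullet> A w\<close>. For a bilinear payoff
  \<open>z \<bullet> L w\<close> on compact convex sets, a fixed point of the continuous map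
  \<open>(z, w) \<mapsto> (\<pi>\<^sub>Z (z + L w), \<pi>\<^sub>W (w - L\<^sup>* z))\<close>, with \<open>\<pi>\<close> the nearest-point projections, is a saddle
  point by the variational characterisation of projections; Brouwer's theorem supplies it.
  A saddle point is a Nash equilibrium, and its payoff is both the lower and the upper value.
\<close>

definition cone_sector :: "real \<Rightarrow> complex set" where
  "cone_sector g = {c. 0 \<le> Re c \<and> \<bar>Im c\<bar> \<le> tan g * Re c}"

lemma abs_arctan_le_iff:
  assumes "0 < g" "g < pi/2"
  shows "\<bar>arctan y\<bar> \<le> g \<longleftrightarrow> \<bar>y\<bar> \<le> tan g"
proof -
  have g: "arctan (tan g) = g" using assms by (intro arctan_tan) auto
  then have "\<bar>arctan y\<bar> \<le> g \<longleftrightarrow> arctan (- tan g) \<le> arctan y \<and> arctan y \<le> arctan (tan g)"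
    by (auto simp: arctan_minus)
  also have "\<dots> \<longleftrightarrow> \<bar>y\<bar> \<le> tan g" by (auto simp: arctan_le_iff)
  finally show ?thesis .
qed

lemma Arg_le_iff_in_cone_sector:
  assumes g: "0 < g" "g < pi/2"
  shows "c = 0 \<or> \<bar>Arg c\<bar> \<le> g \<longleftrightarrow> c \<in> cone_sector g"
proof (cases "Re c > 0")
  case True
  then have "\<bar>Arg c\<bar> \<le> g \<longleftrightarrow> \<bar>Im c\<bar> / Re c \<le> tan g"
    by (simp add: arg_conv_arctan abs_arctan_le_iff[OF g])
  with True show ?thesis by (auto simp: cone_sector_def divide_le_eq mult.commute)
next
  case False
  have "\<bar>Arg c\<bar> > g" if "c \<noteq> 0"
    using Arg_Re_pos[of c] False g that by linarith
  moreover have "c \<in> cone_sector g \<longleftrightarrow> c = 0"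
    using False by (auto simp: cone_sector_def complex_eq_iff)
  ultimately show ?thesis by auto
qed

lemma convex_cone_sector: "convex (cone_sector g)"
proof (rule convexI)
  fix x y :: complex and u v :: real
  assume "x \<in> cone_sector g" "y \<in> cone_sector g" and uv: "0 \<le> u" "0 \<le> v" "u + v = 1"
  then have x: "0 \<le> Re x" "\<bar>Im x\<bar> \<le> tan g * Re x" and y: "0 \<le> Re y" "\<bar>Im y\<bar> \<le> tan g * Re y"
    by (auto simp: cone_sector_def)
  have "\<bar>u * Im x\<bar> \<le> u * (tan g * Re x)" "\<bar>v * Im y\<bar> \<le> v * (tan g * Re y)"
    using x y uv by (simp_all add: abs_mult mult_left_mono)
  then have "\<bar>u * Im x + v * Im y\<bar> \<le> tan g * (u * Re x + v * Re y)"
    by (smt (verit) abs_triangle_ineq distrib_left mult.left_commute)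
  then show "u *\<^sub>R x + v *\<^sub>R y \<in> cone_sector g"
    using x y uv by (simp add: cone_sector_def)
qed

lemma closed_cone_sector: "closed (cone_sector g)"
  unfolding cone_sector_def
  by (intro closed_Collect_conj closed_Collect_le continuous_intros)

lemma cstrat_conv_cone_sector:
  assumes "0 < g" "g < pi/2"
  shows "cstrat g = {z :: complex ^ 'p::finite. (\<forall>k. z $ k \<in> cone_sector g) \<and> (\<Sum>k\<in>UNIV. z $ k) = 1}"
  unfolding cstrat_def using Arg_le_iff_in_cone_sector[OF assms] by auto

lemma norm_le_in_cone_sector:
  assumes "c \<in> cone_sector g"
  shows "norm c \<le> (1 + tan g) * Re c"
proof -
  have "norm c \<le> \<bar>Re c\<bar> + \<bar>Im c\<bar>" by (rule cmod_le)
  then show ?thesis using assms by (simp add: cone_sector_def algebra_simps)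
qed

lemma bounded_cstrat:
  assumes "0 < g" "g < pi/2"
  shows "bounded (cstrat g :: (complex ^ 'p::finite) set)"
proof -
  have "norm z \<le> 1 + tan g" if "z \<in> cstrat g" for z :: "complex ^ 'p"
  proof -
    from that have z: "\<And>k. z $ k \<in> cone_sector g" "(\<Sum>k\<in>UNIV. z $ k) = 1"
      by (auto simp: cstrat_conv_cone_sector[OF assms])
    have "norm z \<le> (\<Sum>k\<in>UNIV. norm (z $ k))"
      by (simp add: norm_vec_def L2_set_le_sum)
    also have "\<dots> \<le> (\<Sum>k\<in>UNIV. (1 + tan g) * Re (z $ k))"
      by (intro sum_mono norm_le_in_cone_sector z)
    also have "\<dots> = (1 + tan g) * Re (\<Sum>k\<in>UNIV. z $ k)"
      by (simp add: sum_distrib_left Re_sum)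
    finally show ?thesis using z(2) by simp
  qed
  then show ?thesis by (auto simp: bounded_iff)
qed

lemma closed_cstrat:
  assumes "0 < g" "g < pi/2"
  shows "closed (cstrat g :: (complex ^ 'p::finite) set)"
proof -
  have "closed ((\<lambda>z :: complex ^ 'p. z $ k) -` cone_sector g)" for k
    by (intro closed_vimage closed_cone_sector continuous_intros)
  then show ?thesis
    unfolding cstrat_conv_cone_sector[OF assms] vimage_def
    by (intro closed_Collect_conj closed_Collect_all closed_Collect_eq continuous_intros)
qed

lemma compact_cstrat:
  assumes "0 < g" "g < pi/2"
  shows "compact (cstrat g :: (complex ^ 'p::finite) set)"
  using closed_cstrat[OF assms] bounded_cstrat[OF assms] by (simp add: compact_eq_bounded_closed)

lemma convex_cstrat:
  assumes "0 < g" "g < pi/2"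
  shows "convex (cstrat g :: (complex ^ 'p::finite) set)"
proof (rule convexI)
  note cstrat_eq = cstrat_conv_cone_sector[OF assms]
  fix x y :: "complex ^ 'p" and u v :: real
  assume "x \<in> cstrat g" "y \<in> cstrat g" and uv: "0 \<le> u" "0 \<le> v" "u + v = 1"
  then have x: "\<And>k. x $ k \<in> cone_sector g" "(\<Sum>k\<in>UNIV. x $ k) = 1"
    and y: "\<And>k. y $ k \<in> cone_sector g" "(\<Sum>k\<in>UNIV. y $ k) = 1"
    by (auto simp: cstrat_eq)
  have "(u *\<^sub>R x + v *\<^sub>R y) $ k \<in> cone_sector g" for k
    using convexD[OF convex_cone_sector x(1) y(1) uv] by simp
  moreover have "(\<Sum>k\<in>UNIV. (u *\<^sub>R x + v *\<^sub>R y) $ k) = 1"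
    using x(2) y(2) uv by (simp add: sum.distrib flip: scaleR_sum_right scaleR_add_left)
  ultimately show "u *\<^sub>R x + v *\<^sub>R y \<in> cstrat g" by (simp add: cstrat_eq)
qed

lemma cstrat_nonempty:
  assumes "0 < g" "g < pi/2"
  shows "cstrat g \<noteq> ({} :: (complex ^ 'p::finite) set)"
proof -
  have "(\<chi> k. complex_of_real (1 / real CARD('p))) \<in> (cstrat g :: (complex ^ 'p) set)"
    using assms by (simp add: cstrat_conv_cone_sector cone_sector_def tan_pos_pi2_le)
  then show ?thesis by blast
qed

lemma cpayoff_eq_inner: "cpayoff A z w = z \<bullet> (A *v w)"
proof -
  have "cpayoff A z w = Re (\<Sum>i\<in>UNIV. cnj (z $ i) * (A *v w) $ i)"
    by (simp add: cpayoff_def matrix_vector_mult_def sum_distrib_left mult.assoc)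
  then show ?thesis by (simp add: inner_vec_def inner_complex_def Re_sum)
qed

lemma linear_saddle_point_exists:
  fixes L :: "'b::euclidean_space \<Rightarrow> 'a::euclidean_space"
  assumes L: "linear L"
    and Z: "compact Z" "convex Z" "Z \<noteq> {}" and W: "compact W" "convex W" "W \<noteq> {}"
  obtains z0 w0 where "z0 \<in> Z" "w0 \<in> W"
    "\<And>z. z \<in> Z \<Longrightarrow> z \<bullet> L w0 \<le> z0 \<bullet> L w0"
    "\<And>w. w \<in> W \<Longrightarrow> z0 \<bullet> L w0 \<le> z0 \<bullet> L w"
proof -
  have "closed Z" "closed W" using Z W by (simp_all add: compact_imp_closed)
  define F where "F p = (closest_point Z (fst p + L (snd p)),
                         closest_point W (snd p - adjoint L (fst p)))" for p :: "'a \<times> 'b"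
  have cont_L: "continuous_on S L" for S
    using L by (simp add: linear_continuous_on linear_conv_bounded_linear)
  have cont_adjoint: "continuous_on S (adjoint L)" for S
    using adjoint_linear[OF L] by (simp add: linear_continuous_on linear_conv_bounded_linear)
  have "continuous_on (Z \<times> W) F"
    unfolding F_def
    by (intro continuous_on_Pair continuous_intros
        continuous_on_compose2[OF continuous_on_closest_point[OF Z(2) \<open>closed Z\<close> Z(3)]]
        continuous_on_compose2[OF continuous_on_closest_point[OF W(2) \<open>closed W\<close> W(3)]]
        continuous_on_compose2[OF cont_L] continuous_on_compose2[OF cont_adjoint]) auto
  moreover have "F \<in> Z \<times> W \<rightarrow> Z \<times> W"
    using closest_point_in_set[OF \<open>closed Z\<close> Z(3)] closest_point_in_set[OF \<open>closed W\<close> W(3)]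
    by (auto simp: F_def)
  ultimately obtain p where "p \<in> Z \<times> W" "F p = p"
    using brouwer[OF compact_Times[OF Z(1) W(1)] convex_Times[OF Z(2) W(2)]] Z(3) W(3) by blast
  then obtain z0 w0 where zw0: "z0 \<in> Z" "w0 \<in> W" "F (z0, w0) = (z0, w0)"
    by (cases p) auto
  then have fix_z: "closest_point Z (z0 + L w0) = z0"
    and fix_w: "closest_point W (w0 - adjoint L z0) = w0"
    by (simp_all add: F_def)
  show thesis
  proof (rule that[OF zw0(1,2)])
    fix z assume "z \<in> Z"
    from closest_point_dot[OF Z(2) \<open>closed Z\<close> this, of "z0 + L w0"]
    show "z \<bullet> L w0 \<le> z0 \<bullet> L w0"
      by (simp add: fix_z inner_diff_right inner_commute)
  next
    fix w assume "w \<in> W"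
    from closest_point_dot[OF W(2) \<open>closed W\<close> this, of "w0 - adjoint L z0"]
    show "z0 \<bullet> L w0 \<le> z0 \<bullet> L w"
      by (simp add: fix_w inner_diff_right adjoint_clauses[OF L])
  qed
qed

lemma saddle_point_value:
  fixes f :: "'a \<Rightarrow> 'b \<Rightarrow> real"
  assumes "z0 \<in> Z" "w0 \<in> W"
    and saddle_z: "\<And>z. z \<in> Z \<Longrightarrow> f z w0 \<le> f z0 w0"
    and saddle_w: "\<And>w. w \<in> W \<Longrightarrow> f z0 w0 \<le> f z0 w"
    and bdd_w: "\<And>z. z \<in> Z \<Longrightarrow> bdd_below (f z ` W)"
    and bdd_z: "\<And>w. w \<in> W \<Longrightarrow> bdd_above ((\<lambda>z. f z w) ` Z)"
  shows "\<forall>z\<in>Z. (INF w\<in>W. f z w) \<le> (INF w\<in>W. f z0 w)"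
    and "\<forall>w\<in>W. (SUP z\<in>Z. f z w0) \<le> (SUP z\<in>Z. f z w)"
    and "(SUP z\<in>Z. INF w\<in>W. f z w) = f z0 w0"
    and "(INF w\<in>W. SUP z\<in>Z. f z w) = f z0 w0"
proof -
  have inf_z0: "(INF w\<in>W. f z0 w) = f z0 w0"
    by (rule cInf_eq_minimum) (use assms in auto)
  have sup_w0: "(SUP z\<in>Z. f z w0) = f z0 w0"
    by (rule cSup_eq_maximum) (use assms in auto)
  have inf_le: "(INF w\<in>W. f z w) \<le> f z0 w0" if "z \<in> Z" for z
    using cINF_lower[OF bdd_w[OF that] \<open>w0 \<in> W\<close>] saddle_z[OF that] by linarith
  have sup_ge: "f z0 w0 \<le> (SUP z\<in>Z. f z w)" if "w \<in> W" for w
    using cSUP_upper[OF \<open>z0 \<in> Z\<close> bdd_z[OF that]] saddle_w[OF that] by linarith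
  show "\<forall>z\<in>Z. (INF w\<in>W. f z w) \<le> (INF w\<in>W. f z0 w)"
    using inf_le by (simp add: inf_z0)
  show "\<forall>w\<in>W. (SUP z\<in>Z. f z w0) \<le> (SUP z\<in>Z. f z w)"
    using sup_ge by (simp add: sup_w0)
  show "(SUP z\<in>Z. INF w\<in>W. f z w) = f z0 w0"
    by (rule cSup_eq_maximum) (auto intro!: image_eqI[where x = z0] simp: inf_z0 inf_le \<open>z0 \<in> Z\<close>)
  show "(INF w\<in>W. SUP z\<in>Z. f z w) = f z0 w0"
    by (rule cInf_eq_minimum) (auto intro!: image_eqI[where x = w0] simp: sup_w0 sup_ge \<open>w0 \<in> W\<close>)
qed

theorem theorem5p2:
  fixes A :: "complex ^ 'n::finite ^ 'm::finite" and \<alpha>0 \<beta>0 :: real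
  assumes "0 < \<alpha>0" "\<alpha>0 < pi / 2" "0 < \<beta>0" "\<beta>0 < pi / 2"
  shows
    "(\<forall>z\<in>cstrat \<alpha>0. \<exists>w0\<in>cstrat \<beta>0. \<forall>w\<in>cstrat \<beta>0. cpayoff A z w0 \<le> cpayoff A z w)
   \<and> (\<forall>w\<in>cstrat \<beta>0. \<exists>z0\<in>cstrat \<alpha>0. \<forall>z\<in>cstrat \<alpha>0. cpayoff A z w \<le> cpayoff A z0 w)
   \<and> (\<exists>z0\<in>cstrat \<alpha>0. \<forall>z\<in>cstrat \<alpha>0.
         (INF w\<in>cstrat \<beta>0. cpayoff A z w) \<le> (INF w\<in>cstrat \<beta>0. cpayoff A z0 w))
   \<and> (\<exists>w0\<in>cstrat \<beta>0. \<forall>w\<in>cstrat \<beta>0.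
         (SUP z\<in>cstrat \<alpha>0. cpayoff A z w0) \<le> (SUP z\<in>cstrat \<alpha>0. cpayoff A z w))
   \<and> (SUP z\<in>cstrat \<alpha>0. INF w\<in>cstrat \<beta>0. cpayoff A z w)
       = (INF w\<in>cstrat \<beta>0. SUP z\<in>cstrat \<alpha>0. cpayoff A z w)
   \<and> (\<exists>z0 w0. complex_nash A \<alpha>0 \<beta>0 z0 w0)"
proof -
  let ?Z = "cstrat \<alpha>0 :: (complex ^ 'm) set" and ?W = "cstrat \<beta>0 :: (complex ^ 'n) set"
  have Z: "compact ?Z" "convex ?Z" "?Z \<noteq> {}" and W: "compact ?W" "convex ?W" "?W \<noteq> {}"
    using assms by (simp_all add: compact_cstrat convex_cstrat cstrat_nonempty)
  have cont_w: "continuous_on ?W (cpayoff A z)" and cont_z: "continuous_on ?Z (\<lambda>z. cpayoff A z w)"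
    for z w by (simp_all add: cpayoff_eq_inner continuous_intros)
  obtain z0 w0 where zw0: "z0 \<in> ?Z" "w0 \<in> ?W"
    and saddle: "\<And>z. z \<in> ?Z \<Longrightarrow> cpayoff A z w0 \<le> cpayoff A z0 w0"
                "\<And>w. w \<in> ?W \<Longrightarrow> cpayoff A z0 w0 \<le> cpayoff A z0 w"
    using linear_saddle_point_exists[OF matrix_vector_mul_linear Z W]
    unfolding cpayoff_eq_inner by metis
  then have "complex_nash A \<alpha>0 \<beta>0 z0 w0"
    by (simp add: complex_nash_def)
  moreover have bdd: "bdd_below (cpayoff A z ` ?W)" "bdd_above ((\<lambda>z. cpayoff A z w) ` ?Z)" for z w
    by (simp_all add: bounded_imp_bdd_below bounded_imp_bdd_above compact_imp_bounded
        compact_continuous_image Z(1) W(1) cont_w cont_z)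
  ultimately show ?thesis
    using saddle_point_value[where f = "cpayoff A", OF zw0 saddle bdd] zw0
      continuous_attains_inf[OF W(1,3) cont_w] continuous_attains_sup[OF Z(1,3) cont_z]
    by metis
qed

end
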